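(* Let $h$ and $k$ be positive integers. If $A$ is a set of $k$ nonnegative integers with $\ell_h(A)=n_h(k)$, then $\operatorname{diam}(A)\le n_h(k)$.
   Context: $[0,n]=\{0,1,\ldots,n\}$. $hA=\{a_1+\cdots+a_h: a_i\in A\}$ (summands not necessarily distinct). For a nonempty finite $A\subseteq\mathbf{N}_0=\{0,1,2,\ldots\}$ with $0\in A$, $\ell_h(A)$ is the largest integer $n\ge0$ with $[0,n]\subseteq hA$ (undefined if $0\notin A$). $n_h(k)=\max\{\ell_h(A): A\subseteq\mathbf{N}_0, |A|=k\}$ (over sets where $\ell_h$ is defined). $\operatorname{diam}(A)=\sup\{|a-a'|: a,a'\in A\}$. *)

theory Defs
  imports Main
begin

definition hsum :: "nat \<Rightarrow> nat set \<Rightarrow> nat set" where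
  "hsum h A = {m. \<exists>a. (\<forall>i<h. a i \<in> A) \<and> m = (\<Sum>i<h. a i)}"

(* \<ell>_h(A): largest n \<ge> 0 with [0,n] \<subseteq> hA (meaningful for finite nonempty A with 0 \<in> A) *)
definition ell :: "nat \<Rightarrow> nat set \<Rightarrow> nat" where
  "ell h A = Max {n. {0..n} \<subseteq> hsum h A}"

definition nh :: "nat \<Rightarrow> nat \<Rightarrow> nat" where
  "nh h k = Max {ell h A | A. finite A \<and> card A = k \<and> 0 \<in> A}"

definition diam :: "nat set \<Rightarrow> nat" where
  "diam A = Max A - Min A"

end

theory Submission
  imports Defs "HOL-Library.FuncSet"
begin

text \<open>If the largest element m of A exceeded n = ell h A, then n + 1 would be missing
from hA, hence from A, and replacing m by n + 1 would give a set of the same size with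
[0, n + 1] in its h-fold sumset: every representation of a number x \<le> n only uses
summands \<le> x < m, and n + 1 itself is a summand plus h - 1 zeros. This contradicts the
maximality of ell h A. So max A \<le> n, and the diameter is at most max A because 0 \<in> A.\<close>

lemma hsum_eq_image_PiE: "hsum h A = (\<lambda>a. \<Sum>i<h. a i) ` PiE {..<h} (\<lambda>_. A)"
proof (intro equalityI subsetI)
  fix m assume "m \<in> hsum h A"
  then obtain a where a: "\<forall>i<h. a i \<in> A" "m = (\<Sum>i<h. a i)"
    unfolding hsum_def by auto
  then have "restrict a {..<h} \<in> PiE {..<h} (\<lambda>_. A)" "m = (\<Sum>i<h. restrict a {..<h} i)"
    by auto
  then show "m \<in> (\<lambda>a. \<Sum>i<h. a i) ` PiE {..<h} (\<lambda>_. A)"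
    by blast
qed (auto simp: hsum_def)

lemma card_hsum_le:
  assumes "finite A"
  shows "card (hsum h A) \<le> card A ^ h"
  unfolding hsum_eq_image_PiE
  using card_image_le[of "PiE {..<h} (\<lambda>_. A)"] assms by (simp add: finite_PiE card_PiE)

lemma finite_hsum: "finite A \<Longrightarrow> finite (hsum h A)"
  by (simp add: hsum_eq_image_PiE finite_PiE)

lemma zero_in_hsum: "0 \<in> A \<Longrightarrow> 0 \<in> hsum h A"
  unfolding hsum_def by (auto intro!: exI[of _ "\<lambda>_. 0"])

lemma subset_hsum:
  assumes "h \<ge> 1" and "0 \<in> A"
  shows "A \<subseteq> hsum h A"
proof
  fix x assume "x \<in> A"
  let ?a = "\<lambda>i::nat. if i = 0 then x else 0"
  have "(\<Sum>i<h. ?a i) = x"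
    using assms(1) by simp
  then show "x \<in> hsum h A"
    unfolding hsum_def using \<open>x \<in> A\<close> assms(2) by (auto intro!: exI[of _ ?a])
qed

lemma hsum_transfer_below:
  assumes "x \<in> hsum h A" and "A \<inter> {..x} \<subseteq> B"
  shows "x \<in> hsum h B"
proof -
  obtain a where a: "\<forall>i<h. a i \<in> A" and x: "x = (\<Sum>i<h. a i)"
    using assms(1) unfolding hsum_def by auto
  have "a i \<le> x" if "i < h" for i
    using that x by (simp add: member_le_sum)
  with a assms(2) have "\<forall>i<h. a i \<in> B"
    by blast
  with x show ?thesis
    unfolding hsum_def by auto
qed

lemma interval_in_hsum_less_card_power:
  assumes "finite A" and "{0..n} \<subseteq> hsum h A"
  shows "n < card A ^ h"
proof -
  have "Suc n = card {0..n}"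
    by simp
  also have "\<dots> \<le> card (hsum h A)"
    using assms by (intro card_mono finite_hsum)
  also have "\<dots> \<le> card A ^ h"
    using assms(1) by (rule card_hsum_le)
  finally show ?thesis
    by simp
qed

lemma
  assumes "finite A" and "0 \<in> A"
  shows interval_ell_subset_hsum: "{0..ell h A} \<subseteq> hsum h A"
    and le_ell: "{0..n} \<subseteq> hsum h A \<Longrightarrow> n \<le> ell h A"
    and ell_less_card_power: "ell h A < card A ^ h"
proof -
  let ?S = "{n. {0..n} \<subseteq> hsum h A}"
  have fin: "finite ?S"
    by (rule finite_subset[of _ "{..<card A ^ h}"])
      (auto dest: interval_in_hsum_less_card_power[OF assms(1)])
  have "0 \<in> ?S"
    using zero_in_hsum[OF assms(2)] by auto
  then have "ell h A \<in> ?S"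
    unfolding ell_def using Max_in[OF fin] by blast
  then show "{0..ell h A} \<subseteq> hsum h A"
    by simp
  then show "ell h A < card A ^ h"
    using interval_in_hsum_less_card_power[OF assms(1)] by blast
  show "{0..n} \<subseteq> hsum h A \<Longrightarrow> n \<le> ell h A"
    unfolding ell_def using Max_ge[OF fin] by blast
qed

lemma Suc_ell_notin_hsum:
  assumes "finite A" and "0 \<in> A"
  shows "Suc (ell h A) \<notin> hsum h A"
proof
  assume "Suc (ell h A) \<in> hsum h A"
  with interval_ell_subset_hsum[OF assms, of h] have "{0..Suc (ell h A)} \<subseteq> hsum h A"
    by (auto simp: le_Suc_eq)
  with le_ell[OF assms] show False
    by fastforce
qed

lemma ell_le_nh:
  assumes "finite A" and "0 \<in> A"
  shows "ell h A \<le> nh h (card A)"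
proof -
  let ?T = "{ell h B | B. finite B \<and> card B = card A \<and> 0 \<in> B}"
  have "finite ?T"
    by (rule finite_subset[of _ "{..<card A ^ h}"]) (auto dest: ell_less_card_power)
  then show ?thesis
    unfolding nh_def using assms by (intro Max_ge) auto
qed

lemma interval_hsum_exchange:
  assumes "h \<ge> 1" and "0 \<in> A" and "{0..n} \<subseteq> hsum h A" and "n < m"
  shows "{0..Suc n} \<subseteq> hsum h (insert (Suc n) (A - {m}))"
proof
  let ?B = "insert (Suc n) (A - {m})"
  fix x assume x: "x \<in> {0..Suc n}"
  show "x \<in> hsum h ?B"
  proof (cases "x = Suc n")
    case True
    have "0 \<in> ?B"
      using assms(2,4) by auto
    with True show ?thesis
      using subset_hsum[OF assms(1) \<open>0 \<in> ?B\<close>] by blast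
  next
    case False
    with x have "x \<le> n"
      by simp
    with assms(3) have "x \<in> hsum h A"
      by auto
    moreover have "A \<inter> {..x} \<subseteq> ?B"
      using \<open>x \<le> n\<close> assms(4) by auto
    ultimately show ?thesis
      by (rule hsum_transfer_below)
  qed
qed

lemma Max_le_ell_if_ell_eq_nh:
  assumes "h \<ge> 1" and "finite A" and "0 \<in> A" and "ell h A = nh h (card A)"
  shows "Max A \<le> ell h A"
proof (rule ccontr)
  define n where "n = ell h A"
  define m where "m = Max A"
  define B where "B = insert (Suc n) (A - {m})"
  assume "\<not> Max A \<le> ell h A"
  then have "n < m"
    by (simp add: n_def m_def)
  have "m \<in> A"
    unfolding m_def using assms(2,3) by (auto intro: Max_in)
  have "Suc n \<notin> A"
    using Suc_ell_notin_hsum[OF assms(2,3)] subset_hsum[OF assms(1,3)] n_def by blast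
  moreover have "card A > 0"
    using assms(2,3) card_gt_0_iff by blast
  ultimately have "card B = card A"
    unfolding B_def using assms(2) \<open>m \<in> A\<close> by simp
  have "finite B" "0 \<in> B"
    unfolding B_def using assms(2,3) \<open>n < m\<close> by auto
  have "{0..Suc n} \<subseteq> hsum h B"
    unfolding B_def n_def
    by (rule interval_hsum_exchange[OF assms(1,3) interval_ell_subset_hsum[OF assms(2,3)]])
      (simp add: \<open>n < m\<close> flip: n_def)
  then have "Suc n \<le> ell h B"
    using le_ell[OF \<open>finite B\<close> \<open>0 \<in> B\<close>] by blast
  also have "\<dots> \<le> nh h (card A)"
    using ell_le_nh[OF \<open>finite B\<close> \<open>0 \<in> B\<close>] \<open>card B = card A\<close> by simp
  finally show False
    using assms(4) n_def by simp
qed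

theorem mainTheorem7:
  fixes h k :: nat and A :: "nat set"
  assumes "h \<ge> 1" and "k \<ge> 1"
    and "finite A" and "card A = k" and "0 \<in> A"
    and "ell h A = nh h k"
  shows "diam A \<le> nh h k"
proof -
  have "diam A \<le> Max A"
    by (simp add: diam_def)
  also have "\<dots> \<le> ell h A"
    using Max_le_ell_if_ell_eq_nh[OF assms(1,3,5)] assms(4,6) by simp
  finally show ?thesis
    using assms(6) by simp
qed

end
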